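(* Let $\ell,\tilde\ell\in\mathcal{D}^-[0,\infty)$ and $r,\tilde r\in\mathcal{D}^+[0,\infty)$ with $\tilde\ell=\ell$, $r\le\tilde r$ and $\inf_{t\ge0}(r(t)-\ell(t))>0$. Given $\psi\in\mathcal{D}[0,\infty)$, let $(\eta_\ell,\eta_r)$ and $(\eta_{\tilde\ell},\eta_{\tilde r})$ be the constraining processes associated with the SP for $\psi$ on $[\ell(\cdot),r(\cdot)]$ and on $[\tilde\ell(\cdot),\tilde r(\cdot)]$, respectively. Then for every $t\ge0$, $\eta_r(t)\ge\eta_{\tilde r}(t)$ and $\eta_\ell(t)\ge\eta_{\tilde\ell}(t)$.
   Context: $\mathcal{D}[0,\infty)$ denotes the càdlàg functions $[0,\infty)\to(-\infty,\infty)$; $\mathcal{D}^-[0,\infty)$ (resp. $\mathcal{D}^+[0,\infty)$) denotes càdlàg functions with values in $[-\infty,\infty)$ (resp. $(-\infty,\infty]$). SP: $(\phi,\eta)\in\mathcal{D}[0,\infty)^2$ solves the SP on $[\ell(\cdot),r(\cdot)]$ for $\psi$ if (1) $\phi(t)=\psi(t)+\eta(t)\in[\ell(t),r(t)]$ for all $t\ge0$; (2) $\eta=\eta_\ell-\eta_r$ with $\eta_\ell,\eta_r$ non-decreasing and $\int_0^\infty \mathbb{I}_{\{\phi(s)>\ell(s)\}}\,d\eta_\ell(s)=0$, $\int_0^\infty \mathbb{I}_{\{\phi(s)<r(s)\}}\,d\eta_r(s)=0$. The pair $(\eta_\ell,\eta_r)$ is called the pair of constraining processes associated with the SP. When $\inf_t(r(t)-\ell(t))>0$,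 the SP has a unique solution for every $\psi\in\mathcal{D}[0,\infty)$. *)

theory Defs
  imports "HOL-Analysis.Analysis"
begin

definition cadlag_in :: "'a::topological_space set \<Rightarrow> (real \<Rightarrow> 'a) \<Rightarrow> bool" where
  "cadlag_in S f \<longleftrightarrow>
     (\<forall>t\<ge>0. f t \<in> S) \<and>
     (\<forall>t\<ge>0. continuous (at_right t) f) \<and>
     (\<forall>t>0. \<exists>L\<in>S. (f \<longlongrightarrow> L) (at_left t))"

definition D :: "(real \<Rightarrow> real) \<Rightarrow> bool" where
  "D f \<longleftrightarrow> cadlag_in UNIV f"

definition D_minus :: "(real \<Rightarrow> ereal) \<Rightarrow> bool" where
  "D_minus f \<longleftrightarrow> cadlag_in (UNIV - {\<infinity>}) f"

definition D_plus :: "(real \<Rightarrow> ereal) \<Rightarrow> bool" where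
  "D_plus f \<longleftrightarrow> cadlag_in (UNIV - {-\<infinity>}) f"

text \<open>Lebesgue-Stieltjes measure d\<eta> on [0,\<infinity>) of a nondecreasing cadlag \<eta>, with the
  convention \<eta>(0-) = 0 (so \<eta>(0) is an atom at 0).\<close>
definition LS_measure :: "(real \<Rightarrow> real) \<Rightarrow> real measure" where
  "LS_measure \<eta> = interval_measure (\<lambda>s. if s < 0 then 0 else \<eta> s)"

definition SP_sol ::
  "(real \<Rightarrow> ereal) \<Rightarrow> (real \<Rightarrow> ereal) \<Rightarrow> (real \<Rightarrow> real) \<Rightarrow>
   (real \<Rightarrow> real) \<Rightarrow> (real \<Rightarrow> real) \<Rightarrow> (real \<Rightarrow> real) \<Rightarrow> (real \<Rightarrow> real) \<Rightarrow> bool" where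
  "SP_sol l r \<psi> \<phi> \<eta> \<eta>l \<eta>r \<longleftrightarrow>
     D \<phi> \<and> D \<eta> \<and> D \<eta>l \<and> D \<eta>r \<and>
     (\<forall>t\<ge>0. \<phi> t = \<psi> t + \<eta> t \<and> l t \<le> ereal (\<phi> t) \<and> ereal (\<phi> t) \<le> r t) \<and>
     (\<forall>t\<ge>0. \<eta> t = \<eta>l t - \<eta>r t) \<and>
     mono_on {0..} \<eta>l \<and> mono_on {0..} \<eta>r \<and> 0 \<le> \<eta>l 0 \<and> 0 \<le> \<eta>r 0 \<and>
     (\<integral>\<^sup>+ s. indicator {s. 0 \<le> s \<and> ereal (\<phi> s) > l s} s \<partial>LS_measure \<eta>l) = 0 \<and>
     (\<integral>\<^sup>+ s. indicator {s. 0 \<le> s \<and> ereal (\<phi> s) < r s} s \<partial>LS_measure \<eta>r) = 0"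

end

theory Submission
  imports Defs
begin

text \<open>A constraining process can only grow while the path sits on the corresponding barrier.
  Hence \<open>\<phi>\<^sub>t - \<phi>\<close> can only decrease while \<open>\<phi>\<^sub>t\<close> is at \<open>r\<^sub>t\<close> or \<open>\<phi>\<close> is at \<open>l\<close>,
  which is impossible once \<open>\<phi>\<^sub>t < \<phi>\<close>; so \<open>\<phi> \<le> \<phi>\<^sub>t\<close>, i.e.
  \<open>\<eta>l - \<eta>lt \<le> \<eta>r - \<eta>rt\<close>. If \<open>\<eta>l - \<eta>lt\<close> became negative, then before every such time
  \<open>\<phi>\<^sub>t\<close> touches \<open>l\<close> (where \<open>\<eta>lt\<close> overtook \<open>\<eta>l\<close>), and before that \<open>\<phi>\<^sub>t\<close> touches
  \<open>r\<^sub>t \<ge> r\<close> (where \<open>\<eta>rt\<close> overtook \<open>\<eta>r\<close>). Near the infimum of these times \<open>\<phi>\<^sub>t - l\<close>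
  would oscillate by \<open>inf (r - l) > 0\<close> in every right neighbourhood, contradicting
  right-continuity.\<close>

definition zero_ext :: "(real \<Rightarrow> real) \<Rightarrow> real \<Rightarrow> real" where
  "zero_ext f s = (if s < 0 then 0 else f s)"

lemma zero_ext_nonneg [simp]: "0 \<le> s \<Longrightarrow> zero_ext f s = f s"
  and zero_ext_neg [simp]: "s < 0 \<Longrightarrow> zero_ext f s = 0"
  by (simp_all add: zero_ext_def)

lemma LS_measure_eq_interval_measure: "LS_measure f = interval_measure (zero_ext f)"
  by (simp add: LS_measure_def zero_ext_def[abs_def])

lemma mono_zero_ext:
  assumes "mono_on {0..} f" "0 \<le> f 0"
  shows "mono (zero_ext f)"
  using assms unfolding zero_ext_def mono_on_def mono_def
  by (smt (verit, best) atLeast_iff)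

lemma continuous_at_right_zero_ext:
  assumes "\<And>s. 0 \<le> s \<Longrightarrow> continuous (at_right s) f"
  shows "continuous (at_right a) (zero_ext f)"
proof (cases "a < 0")
  case True
  have "\<forall>\<^sub>F s in at_right a. zero_ext f s = zero_ext f a"
    using True unfolding eventually_at_right_field by (intro exI[of _ 0]) auto
  then show ?thesis
    unfolding continuous_within by (rule tendsto_eventually)
next
  case False
  have "\<forall>\<^sub>F s in at_right a. f s = zero_ext f s"
    using False unfolding eventually_at_right_field by (intro exI[of _ "a + 1"]) auto
  with assms[of a] False show ?thesis
    unfolding continuous_within by (auto elim: Lim_transform_eventually)
qed

lemma mono_add_fun: "mono f \<Longrightarrow> mono g \<Longrightarrow> mono (\<lambda>x. f x + g x :: 'a::ordered_ab_semigroup_add)"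
  by (simp add: mono_def add_mono)

text \<open>\<open>flat_on Q F\<close> is what we use of \<open>dF(Q) = 0\<close>: \<open>F\<close> does not grow on half-open
  intervals inside \<open>Q\<close>, nor does it jump at the left end of closed intervals inside \<open>Q\<close>.\<close>

definition flat_on :: "real set \<Rightarrow> (real \<Rightarrow> real) \<Rightarrow> bool" where
  "flat_on Q F \<longleftrightarrow>
     (\<forall>x y. x \<le> y \<longrightarrow> {x<..y} \<subseteq> Q \<longrightarrow> F y \<le> F x) \<and>
     (\<forall>x y e. x \<le> y \<longrightarrow> {x..y} \<subseteq> Q \<longrightarrow> 0 < e \<longrightarrow> (\<exists>z<x. F y - F z < e))"

lemma flat_on_Int_add:
  assumes "flat_on Q F" "flat_on R G" "mono F" "mono G"
  shows "flat_on (Q \<inter> R) (\<lambda>s. F s + G s)"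
  unfolding flat_on_def
proof (intro conjI allI impI)
  fix x y :: real assume "x \<le> y" "{x<..y} \<subseteq> Q \<inter> R"
  with assms(1,2) show "F y + G y \<le> F x + G x"
    unfolding flat_on_def by (meson add_mono le_inf_iff)
next
  fix x y e :: real assume xy: "x \<le> y" "{x..y} \<subseteq> Q \<inter> R" "0 < e"
  obtain z1 where z1: "z1 < x" "F y - F z1 < e / 2"
    using assms(1) xy unfolding flat_on_def by (meson half_gt_zero le_inf_iff)
  obtain z2 where z2: "z2 < x" "G y - G z2 < e / 2"
    using assms(2) xy unfolding flat_on_def by (meson half_gt_zero le_inf_iff)
  have "F z1 \<le> F (max z1 z2)" "G z2 \<le> G (max z1 z2)"
    using assms(3,4) by (auto simp: mono_def)
  with z1 z2 show "\<exists>z<x. F y + G y - (F z + G z) < e"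
    by (intro exI[of _ "max z1 z2"]) auto
qed

text \<open>If \<open>F + G\<close> is nondecreasing, \<open>G\<close> can only decrease where \<open>F\<close> grows; so if \<open>G\<close> drops
  below \<open>0\<close> it does so at the last time \<open>u\<close> it was nonnegative, or just after it, and
  flatness of \<open>F\<close> forbids both unless \<open>G < 0\<close> somewhere outside \<open>Q\<close>.\<close>

lemma flat_on_negative_point:
  assumes flat: "flat_on Q F" and mono_F: "mono F" and mono_FG: "mono (\<lambda>s. F s + G s)"
    and "x0 \<le> t" "0 \<le> G x0" "G t < 0"
  shows "\<exists>s\<in>{x0..t}. G s < 0 \<and> s \<notin> Q"
proof (rule ccontr)
  assume no_point: "\<not> ?thesis"
  have decr: "G x - G y \<le> F y - F x" if "x \<le> y" for x y
    using monoD[OF mono_FG that] by simp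
  define S where "S = {s. x0 \<le> s \<and> s \<le> t \<and> 0 \<le> G s}"
  define u where "u = Sup S"
  have "x0 \<in> S" "bdd_above S"
    using assms(4,5) by (auto simp: S_def intro: bdd_aboveI[of _ t])
  then have u: "x0 \<le> u" "u \<le> t"
    unfolding u_def using \<open>x0 \<le> t\<close> by (auto intro: cSup_upper cSup_least simp: S_def)
  have G_neg: "G s < 0" if "u < s" "s \<le> t" for s
    using that u cSup_upper[OF _ \<open>bdd_above S\<close>, of s] by (force simp: S_def u_def)
  have in_Q: "{u<..t} \<subseteq> Q"
    using no_point G_neg u by fastforce
  show False
  proof (cases "0 \<le> G u")
    case True
    have "F t \<le> F u" using flat in_Q u unfolding flat_on_def by blast
    then show False using decr[OF u(2)] True \<open>G t < 0\<close> by linarith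
  next
    case False
    then have "u \<in> Q" using no_point u by auto
    with in_Q have "{u..t} \<subseteq> Q" by (auto simp: le_less)
    then obtain z where z: "z < u" "F t - F z < - G t"
      using flat u \<open>G t < 0\<close> unfolding flat_on_def by (meson neg_0_less_iff_less)
    then obtain s where s: "s \<in> S" "z < s"
      using less_cSup_iff[of S z] \<open>x0 \<in> S\<close> \<open>bdd_above S\<close> unfolding u_def by blast
    then have "s \<le> t" "0 \<le> G s" "F z \<le> F s"
      using mono_F by (auto simp: S_def mono_def)
    then show False using decr[OF \<open>s \<le> t\<close>] z by linarith
  qed
qed

corollary flat_on_zero_ext_negative_point:
  assumes "flat_on Q F" "mono F" "mono (\<lambda>s. F s + zero_ext g s)" "0 \<le> t" "g t < 0"
  shows "\<exists>s\<in>{0..t}. g s < 0 \<and> s \<notin> Q"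
proof -
  obtain s where s: "s \<in> {-1..t}" "zero_ext g s < 0" "s \<notin> Q"
    using flat_on_negative_point[OF assms(1-3), of "-1" t] assms(4,5) by auto
  then have "0 \<le> s" by (cases "s < 0") auto
  with s show ?thesis by auto
qed

lemma INT_greaterThanAtMost_shrink: "(\<Inter>n. {x - 1 / Suc n<..y}) = {x..y :: real}"
proof (intro equalityI subsetI)
  fix s assume "s \<in> (\<Inter>n. {x - 1 / Suc n<..y})"
  then have s: "\<And>n. x - 1 / Suc n < s" "s \<le> y" by auto
  have "x \<le> s"
  proof (rule ccontr)
    assume "\<not> x \<le> s"
    then obtain n where "1 / Suc n < x - s" by (metis diff_gt_0_iff_gt not_le nat_approx_posE)
    with s(1)[of n] show False by linarith
  qed
  with s show "s \<in> {x..y}" by simp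
qed (auto intro: order.strict_trans2[of _ x])

lemma interval_measure_Icc_less_imp_increment_less:
  assumes mono_F: "mono F" and cont_F: "\<And>a. continuous (at_right a) F"
    and "x \<le> y" and small: "emeasure (interval_measure F) {x..y} < ennreal e"
  shows "\<exists>z<x. F y - F z < e"
proof -
  let ?M = "interval_measure F"
  define A where "A n = {x - 1 / Suc n<..y}" for n :: nat
  have A_eq: "emeasure ?M (A n) = F y - F (x - 1 / Suc n)" for n
    unfolding A_def using \<open>x \<le> y\<close> mono_F cont_F
    by (intro emeasure_interval_measure_Ioc) (auto simp: mono_def intro: order_trans[of _ x])
  have "decseq A"
  proof (rule decseq_SucI)
    fix n
    have "1 / real (Suc (Suc n)) \<le> 1 / real (Suc n)" by (intro divide_left_mono) auto
    then show "A (Suc n) \<subseteq> A n" unfolding A_def by auto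
  qed
  have "(\<Inter>n. A n) = {x..y}"
    unfolding A_def by (rule INT_greaterThanAtMost_shrink)
  moreover have "(INF n. emeasure ?M (A n)) = emeasure ?M (\<Inter>n. A n)"
    using \<open>decseq A\<close> by (intro INF_emeasure_decseq) (auto simp: A_eq, simp add: A_def)
  ultimately have "(INF n. emeasure ?M (A n)) < ennreal e"
    using small by simp
  then obtain n where "ennreal (F y - F (x - 1 / Suc n)) < ennreal e"
    by (auto simp: INF_less_iff A_eq)
  moreover have "F (x - 1 / Suc n) \<le> F y"
    using \<open>x \<le> y\<close> by (intro monoD[OF mono_F]) (simp add: order_trans[of _ x])
  ultimately have "F y - F (x - 1 / Suc n) < e"
    by (simp add: ennreal_less_iff)
  then show ?thesis by (intro exI[of _ "x - 1 / Suc n"]) auto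
qed

lemma interval_measure_null_imp_flat_on:
  assumes mono_F: "mono F" and cont_F: "\<And>a. continuous (at_right a) F"
    and null: "(\<integral>\<^sup>+ s. indicator Q s \<partial>interval_measure F) = 0"
  shows "flat_on Q F"
proof -
  let ?M = "interval_measure F"
  have null_subset: "emeasure ?M A = 0" if "A \<in> sets ?M" "A \<subseteq> Q" for A
  proof -
    have "emeasure ?M A = (\<integral>\<^sup>+ s. indicator A s \<partial>?M)" using that by simp
    also have "\<dots> \<le> (\<integral>\<^sup>+ s. indicator Q s \<partial>?M)"
      using that by (intro nn_integral_mono) (auto split: split_indicator)
    finally show ?thesis using null by simp
  qed
  show ?thesis unfolding flat_on_def
  proof (intro conjI allI impI)
    fix x y assume "x \<le> y" "{x<..y} \<subseteq> Q"
    then have "ennreal (F y - F x) = 0"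
      using null_subset[of "{x<..y}"] emeasure_interval_measure_Ioc[OF \<open>x \<le> y\<close>] mono_F cont_F
      by (simp add: mono_def)
    then show "F y \<le> F x" by (simp add: ennreal_eq_0_iff)
  next
    fix x y e :: real assume "x \<le> y" "{x..y} \<subseteq> Q" "0 < e"
    then show "\<exists>z<x. F y - F z < e"
      using null_subset[of "{x..y}"]
      by (intro interval_measure_Icc_less_imp_increment_less[OF mono_F cont_F]) auto
  qed
qed

lemma SP_sol_barriers_cong:
  assumes "\<forall>t\<ge>0. l' t = l t" "\<forall>t\<ge>0. r' t = r t"
  shows "SP_sol l' r' \<psi> \<phi> \<eta> \<eta>l \<eta>r \<longleftrightarrow> SP_sol l r \<psi> \<phi> \<eta> \<eta>l \<eta>r"
proof -
  have "{s. 0 \<le> s \<and> l' s < ereal (\<phi> s)} = {s. 0 \<le> s \<and> l s < ereal (\<phi> s)}"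
    "{s. 0 \<le> s \<and> ereal (\<phi> s) < r' s} = {s. 0 \<le> s \<and> ereal (\<phi> s) < r s}"
    "(\<forall>t\<ge>0. \<phi> t = \<psi> t + \<eta> t \<and> l' t \<le> ereal (\<phi> t) \<and> ereal (\<phi> t) \<le> r' t) \<longleftrightarrow>
     (\<forall>t\<ge>0. \<phi> t = \<psi> t + \<eta> t \<and> l t \<le> ereal (\<phi> t) \<and> ereal (\<phi> t) \<le> r t)"
    using assms by auto
  then show ?thesis unfolding SP_sol_def by presburger
qed

lemma SP_sol_path:
  assumes "SP_sol l r \<psi> \<phi> \<eta> \<eta>l \<eta>r" "0 \<le> t"
  shows "\<phi> t = \<psi> t + \<eta>l t - \<eta>r t" and "l t \<le> ereal (\<phi> t)" "ereal (\<phi> t) \<le> r t"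
  using assms unfolding SP_sol_def by auto

lemma SP_sol_continuous_at_right:
  assumes "SP_sol l r \<psi> \<phi> \<eta> \<eta>l \<eta>r" "0 \<le> t"
  shows "continuous (at_right t) \<phi>"
proof -
  have "D \<phi>" using assms(1) unfolding SP_sol_def by blast
  with assms(2) show ?thesis unfolding D_def cadlag_in_def by blast
qed

lemma SP_sol_constraining_processes:
  assumes "SP_sol l r \<psi> \<phi> \<eta> \<eta>l \<eta>r"
  shows "mono (zero_ext \<eta>l)" "flat_on {s. 0 \<le> s \<and> l s < ereal (\<phi> s)} (zero_ext \<eta>l)"
    and "mono (zero_ext \<eta>r)" "flat_on {s. 0 \<le> s \<and> ereal (\<phi> s) < r s} (zero_ext \<eta>r)"
proof -
  have "D \<eta>l" "mono_on {0..} \<eta>l" "0 \<le> \<eta>l 0"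
    "(\<integral>\<^sup>+ s. indicator {s. 0 \<le> s \<and> l s < ereal (\<phi> s)} s \<partial>LS_measure \<eta>l) = 0"
    and "D \<eta>r" "mono_on {0..} \<eta>r" "0 \<le> \<eta>r 0"
    "(\<integral>\<^sup>+ s. indicator {s. 0 \<le> s \<and> ereal (\<phi> s) < r s} s \<partial>LS_measure \<eta>r) = 0"
    using assms unfolding SP_sol_def by blast+
  moreover have "continuous (at_right a) (zero_ext f)" if "D f" for f a
    using that unfolding D_def cadlag_in_def by (intro continuous_at_right_zero_ext) blast
  ultimately show "mono (zero_ext \<eta>l)" "flat_on {s. 0 \<le> s \<and> l s < ereal (\<phi> s)} (zero_ext \<eta>l)"
    and "mono (zero_ext \<eta>r)" "flat_on {s. 0 \<le> s \<and> ereal (\<phi> s) < r s} (zero_ext \<eta>r)"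
    by (auto intro!: mono_zero_ext interval_measure_null_imp_flat_on
        simp: LS_measure_eq_interval_measure simp del: nn_integral_indicator)
qed

lemma SP_sol_mono_barriers:
  assumes "\<forall>t\<ge>0. l t \<le> lt t" "\<forall>t\<ge>0. r t \<le> rt t"
    and sol: "SP_sol l r \<psi> \<phi> \<eta> \<eta>l \<eta>r" and solt: "SP_sol lt rt \<psi> \<phi>t \<eta>t \<eta>lt \<eta>rt"
    and "0 \<le> t"
  shows "\<phi> t \<le> \<phi>t t"
proof (rule ccontr)
  assume "\<not> \<phi> t \<le> \<phi>t t"
  define Q where "Q = {s. 0 \<le> s \<and> ereal (\<phi>t s) < rt s} \<inter> {s. 0 \<le> s \<and> l s < ereal (\<phi> s)}"
  define F where "F s = zero_ext \<eta>rt s + zero_ext \<eta>l s" for s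
  define g where "g s = \<eta>lt s - \<eta>rt s - \<eta>l s + \<eta>r s" for s
  have path: "\<phi>t s - \<phi> s = g s" if "0 \<le> s" for s
    using SP_sol_path(1)[OF sol that] SP_sol_path(1)[OF solt that] by (simp add: g_def)
  note procs = SP_sol_constraining_processes[OF sol] SP_sol_constraining_processes[OF solt]
  have "mono F" unfolding F_def using procs by (intro mono_add_fun)
  moreover have "flat_on Q F" unfolding Q_def F_def using procs by (intro flat_on_Int_add)
  moreover have "(\<lambda>s. F s + zero_ext g s) = (\<lambda>s. zero_ext \<eta>lt s + zero_ext \<eta>r s)"
    by (simp add: fun_eq_iff F_def g_def zero_ext_def)
  then have "mono (\<lambda>s. F s + zero_ext g s)" using procs by (simp add: mono_add_fun)
  ultimately obtain s where s: "0 \<le> s" "g s < 0" "s \<notin> Q"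
    using flat_on_zero_ext_negative_point[of Q F g t] path[OF \<open>0 \<le> t\<close>] \<open>0 \<le> t\<close>
      \<open>\<not> \<phi> t \<le> \<phi>t t\<close> by auto
  then have lt: "ereal (\<phi>t s) < ereal (\<phi> s)" using path[of s] by simp
  have "ereal (\<phi> s) \<le> r s" "r s \<le> rt s" "l s \<le> lt s" "lt s \<le> ereal (\<phi>t s)"
    using SP_sol_path(2,3)[OF sol \<open>0 \<le> s\<close>] SP_sol_path(2,3)[OF solt \<open>0 \<le> s\<close>]
      assms(1,2) \<open>0 \<le> s\<close> by auto
  with lt have "ereal (\<phi>t s) < rt s" "l s < ereal (\<phi> s)"
    by (metis less_le_trans order_trans, metis le_less_trans order_trans)
  with \<open>0 \<le> s\<close> have "s \<in> Q" unfolding Q_def by simp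
  with s show False by simp
qed

lemma SP_sol_lower_constraint_exceeds_at_barrier:
  assumes sol: "SP_sol l r \<psi> \<phi> \<eta> \<eta>l \<eta>r" and "mono (zero_ext f)" "0 \<le> t" "f t < \<eta>l t"
  shows "\<exists>s\<in>{0..t}. f s < \<eta>l s \<and> ereal (\<phi> s) \<le> l s"
proof -
  have "zero_ext \<eta>l s + zero_ext (\<lambda>s. f s - \<eta>l s) s = zero_ext f s" for s
    by (cases "s < 0") simp_all
  with assms have "\<exists>s\<in>{0..t}. f s - \<eta>l s < 0 \<and> s \<notin> {s. 0 \<le> s \<and> l s < ereal (\<phi> s)}"
    by (intro flat_on_zero_ext_negative_point[where F="zero_ext \<eta>l"]
        SP_sol_constraining_processes[OF sol]) simp_all
  then show ?thesis by auto
qed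

lemma SP_sol_upper_constraint_exceeds_at_barrier:
  assumes sol: "SP_sol l r \<psi> \<phi> \<eta> \<eta>l \<eta>r" and "mono (zero_ext f)" "0 \<le> t" "f t < \<eta>r t"
  shows "\<exists>s\<in>{0..t}. f s < \<eta>r s \<and> r s \<le> ereal (\<phi> s)"
proof -
  have "zero_ext \<eta>r s + zero_ext (\<lambda>s. f s - \<eta>r s) s = zero_ext f s" for s
    by (cases "s < 0") simp_all
  with assms have "\<exists>s\<in>{0..t}. f s - \<eta>r s < 0 \<and> s \<notin> {s. 0 \<le> s \<and> ereal (\<phi> s) < r s}"
    by (intro flat_on_zero_ext_negative_point[where F="zero_ext \<eta>r"]
        SP_sol_constraining_processes[OF sol]) simp_all
  then show ?thesis by auto
qed

lemma SP_sol_lower_contact_imp_upper_contact: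
  assumes r_rt: "\<forall>t\<ge>0. r t \<le> rt t"
    and sol: "SP_sol l r \<psi> \<phi> \<eta> \<eta>l \<eta>r" and solt: "SP_sol l rt \<psi> \<phi>t \<eta>t \<eta>lt \<eta>rt"
    and "0 \<le> q" "\<eta>l q < \<eta>lt q" "ereal (\<phi>t q) \<le> l q"
  shows "\<exists>p\<in>{0..q}. \<eta>l p < \<eta>lt p \<and> rt p \<le> ereal (\<phi>t p)"
proof -
  have le_phit: "\<phi> s \<le> \<phi>t s" if "0 \<le> s" for s
    using SP_sol_mono_barriers[OF _ r_rt sol solt that] by simp
  have "\<phi>t q \<le> \<phi> q"
    using \<open>ereal (\<phi>t q) \<le> l q\<close> SP_sol_path(2)[OF sol \<open>0 \<le> q\<close>] by (meson ereal_less_eq(3) order_trans)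
  then have "\<eta>r q < \<eta>rt q"
    using \<open>\<eta>l q < \<eta>lt q\<close> SP_sol_path(1)[OF sol \<open>0 \<le> q\<close>] SP_sol_path(1)[OF solt \<open>0 \<le> q\<close>]
    by linarith
  then obtain p where p: "p \<in> {0..q}" "\<eta>r p < \<eta>rt p" "rt p \<le> ereal (\<phi>t p)"
    using SP_sol_upper_constraint_exceeds_at_barrier[OF solt SP_sol_constraining_processes(3)[OF sol]]
      \<open>0 \<le> q\<close> by blast
  have "0 \<le> p" using p(1) by simp
  with p(2) have "\<eta>l p < \<eta>lt p"
    using le_phit SP_sol_path(1)[OF sol] SP_sol_path(1)[OF solt] by (smt (verit))
  with p show ?thesis by blast
qed

lemma right_continuous_no_oscillation:
  fixes g :: "real \<Rightarrow> ereal"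
  assumes "S \<noteq> {}" "S \<subseteq> {a..}" and cont: "\<And>s. a \<le> s \<Longrightarrow> continuous (at_right s) g" and "0 < \<Delta>"
    and low: "\<And>s. s \<in> S \<Longrightarrow> \<exists>q\<in>S. q \<le> s \<and> g q \<le> 0"
    and high: "\<And>q. q \<in> S \<Longrightarrow> g q \<le> 0 \<Longrightarrow> \<exists>p\<in>S. p \<le> q \<and> \<Delta> \<le> g p"
  shows False
proof -
  define s0 where "s0 = Inf S"
  have bdd: "bdd_below S" using assms(2) by (auto intro: bdd_belowI[of _ a])
  have "a \<le> s0" unfolding s0_def using assms(1,2) by (auto intro: cInf_greatest)
  have near: "\<exists>q\<in>{s0..<b}. \<exists>p\<in>{s0..<b}. g q \<le> 0 \<and> \<Delta> \<le> g p" if "s0 < b" for b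
  proof -
    obtain c where "c \<in> S" "c < b"
      using cInf_less_iff[OF assms(1) bdd, of b] \<open>s0 < b\<close> unfolding s0_def by blast
    then obtain q where q: "q \<in> S" "q \<le> c" "g q \<le> 0" using low by blast
    then obtain p where p: "p \<in> S" "p \<le> q" "\<Delta> \<le> g p" using high[OF q(1,3)] by blast
    have "s0 \<le> p" "s0 \<le> q" using p(1) q(1) cInf_lower[OF _ bdd] unfolding s0_def by auto
    with p q \<open>c < b\<close> show ?thesis by (intro bexI[of _ q] bexI[of _ p] conjI) auto
  qed
  have lim: "(g \<longlongrightarrow> g s0) (at_right s0)"
    using cont[OF \<open>a \<le> s0\<close>] by (simp add: continuous_within)
  show False
  proof (cases "g s0 < \<Delta>")
    case True
    with lim have "\<forall>\<^sub>F p in at_right s0. g p < \<Delta>" by (rule order_tendstoD)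
    then obtain b where b: "s0 < b" "\<And>p. s0 < p \<Longrightarrow> p < b \<Longrightarrow> g p < \<Delta>"
      unfolding eventually_at_right_field by blast
    then obtain p where "p \<in> {s0..<b}" "\<Delta> \<le> g p" using near by blast
    with b(2)[of p] True show False by (cases "p = s0") auto
  next
    case False
    with \<open>0 < \<Delta>\<close> have "0 < g s0" by simp
    with lim have "\<forall>\<^sub>F p in at_right s0. 0 < g p" by (rule order_tendstoD)
    then obtain b where b: "s0 < b" "\<And>p. s0 < p \<Longrightarrow> p < b \<Longrightarrow> 0 < g p"
      unfolding eventually_at_right_field by blast
    then obtain q where "q \<in> {s0..<b}" "g q \<le> 0" using near by blast
    with b(2)[of q] \<open>0 < g s0\<close> show False by (cases "q = s0") auto
  qed
qed

lemma SP_sol_lower_constraint_antimono_upper_barrier: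
  assumes l: "D_minus l" and r_rt: "\<forall>t\<ge>0. r t \<le> rt t" and gap: "0 < (INF t\<in>{0..}. r t - l t)"
    and sol: "SP_sol l r \<psi> \<phi> \<eta> \<eta>l \<eta>r" and solt: "SP_sol l rt \<psi> \<phi>t \<eta>t \<eta>lt \<eta>rt"
    and "0 \<le> t"
  shows "\<eta>lt t \<le> \<eta>l t"
proof (rule ccontr)
  assume "\<not> \<eta>lt t \<le> \<eta>l t"
  define S where "S = {s. 0 \<le> s \<and> \<eta>l s < \<eta>lt s}"
  define g where "g s = ereal (\<phi>t s) - l s" for s
  define \<Delta> where "\<Delta> = (INF t\<in>{0..}. r t - l t)"
  have l_fin: "l s \<noteq> \<infinity>" and l_cont: "continuous (at_right s) l" if "0 \<le> s" for s
    using l that unfolding D_minus_def cadlag_in_def by auto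
  have low: "\<exists>q\<in>S. q \<le> s \<and> g q \<le> 0" if s: "s \<in> S" for s
  proof -
    obtain q where q: "q \<in> {0..s}" "\<eta>l q < \<eta>lt q" "ereal (\<phi>t q) \<le> l q"
      using SP_sol_lower_constraint_exceeds_at_barrier[OF solt SP_sol_constraining_processes(1)[OF sol]]
        s unfolding S_def by blast
    then have "g q \<le> 0" unfolding g_def by (cases "l q") auto
    with q show ?thesis unfolding S_def by auto
  qed
  have high: "\<exists>p\<in>S. p \<le> q \<and> \<Delta> \<le> g p" if "q \<in> S" "g q \<le> 0" for q
  proof -
    have "0 \<le> q" "\<eta>l q < \<eta>lt q" using \<open>q \<in> S\<close> unfolding S_def by auto
    moreover have "ereal (\<phi>t q) \<le> l q"
      using \<open>g q \<le> 0\<close> l_fin[OF \<open>0 \<le> q\<close>] unfolding g_def by (cases "l q") auto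
    ultimately obtain p where p: "p \<in> {0..q}" "\<eta>l p < \<eta>lt p" "rt p \<le> ereal (\<phi>t p)"
      using SP_sol_lower_contact_imp_upper_contact[OF r_rt sol solt] by blast
    have "\<Delta> \<le> r p - l p" unfolding \<Delta>_def using p(1) by (intro INF_lower) simp
    also have "\<dots> \<le> g p"
      unfolding g_def using r_rt p by (intro ereal_minus_mono) (auto intro: order_trans)
    finally show ?thesis using p unfolding S_def by auto
  qed
  have cont: "continuous (at_right s) g" if "0 \<le> s" for s
    using SP_sol_continuous_at_right[OF solt that] l_cont[OF that] l_fin[OF that]
    unfolding g_def continuous_within by (intro tendsto_diff_ereal_general tendsto_ereal) auto
  have "t \<in> S" using \<open>0 \<le> t\<close> \<open>\<not> \<eta>lt t \<le> \<eta>l t\<close> unfolding S_def by auto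
  moreover have "S \<subseteq> {0..}" unfolding S_def by auto
  ultimately show False
    using right_continuous_no_oscillation[OF _ _ cont _ low high] gap unfolding \<Delta>_def by blast
qed

theorem lemma3p1:
  fixes l lt r rt :: "real \<Rightarrow> ereal" and \<psi> \<phi> \<eta> \<eta>l \<eta>r \<phi>t \<eta>t \<eta>lt \<eta>rt :: "real \<Rightarrow> real"
  assumes "D_minus l" and "D_minus lt" and "D_plus r" and "D_plus rt"
    and "\<forall>t\<ge>0. lt t = l t"
    and "\<forall>t\<ge>0. r t \<le> rt t"
    and "(INF t\<in>{0..}. r t - l t) > 0"
    and "D \<psi>"
    and "SP_sol l r \<psi> \<phi> \<eta> \<eta>l \<eta>r"
    and "SP_sol lt rt \<psi> \<phi>t \<eta>t \<eta>lt \<eta>rt"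
  shows "\<forall>t\<ge>0. \<eta>r t \<ge> \<eta>rt t \<and> \<eta>l t \<ge> \<eta>lt t"
proof (intro allI impI)
  fix t :: real assume "0 \<le> t"
  have solt: "SP_sol l rt \<psi> \<phi>t \<eta>t \<eta>lt \<eta>rt"
    using assms(5,10) SP_sol_barriers_cong[of lt l rt rt] by simp
  have "\<phi> t \<le> \<phi>t t"
    using SP_sol_mono_barriers[OF _ assms(6) assms(9) solt \<open>0 \<le> t\<close>] by simp
  moreover have "\<eta>lt t \<le> \<eta>l t"
    by (rule SP_sol_lower_constraint_antimono_upper_barrier[OF assms(1,6,7,9) solt \<open>0 \<le> t\<close>])
  moreover note SP_sol_path(1)[OF assms(9) \<open>0 \<le> t\<close>] SP_sol_path(1)[OF solt \<open>0 \<le> t\<close>]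
  ultimately show "\<eta>rt t \<le> \<eta>r t \<and> \<eta>lt t \<le> \<eta>l t" by linarith
qed

end
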